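(* Let $T$ be a caterpillar tree such that every cutpoint of $T$ has degree at least three. Then $\dim R/I(L(T))=s$, where $s$ is the number of cutpoints of $T$, equivalently the number of maximal cliques of $L(T)$.
   Context: A caterpillar tree is a tree in which removing all vertices of degree $1$ leaves a chordless path. A cutpoint is a vertex whose removal disconnects the graph. The line graph $L(T)$ has vertex set $E(T)$, two vertices adjacent iff the corresponding edges share a vertex. $R=\Bbbk[e_{uv}:\{u,v\}\in E(T)]$ for a field $\Bbbk$, $I(L(T))=\langle e_fe_g: f\neq g\in E(T),\ f\cap g\neq\emptyset\rangle$, and $\dim$ is Krull dimension. *)

theory Defs
  imports Main "HOL-Library.Poly_Mapping" "HOL-Library.Extended_Nat"
begin

definition simple_graph :: "'v set \<Rightarrow> 'v set set \<Rightarrow> bool" where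
  "simple_graph V E \<longleftrightarrow> (\<forall>e\<in>E. \<exists>u v. e = {u, v} \<and> u \<noteq> v \<and> u \<in> V \<and> v \<in> V)"

definition is_walk :: "'v set \<Rightarrow> 'v set set \<Rightarrow> 'v list \<Rightarrow> bool" where
  "is_walk V E p \<longleftrightarrow> p \<noteq> [] \<and> set p \<subseteq> V \<and>
     (\<forall>i. Suc i < length p \<longrightarrow> {p ! i, p ! Suc i} \<in> E)"

definition connected_graph :: "'v set \<Rightarrow> 'v set set \<Rightarrow> bool" where
  "connected_graph V E \<longleftrightarrow>
     (\<forall>u\<in>V. \<forall>v\<in>V. \<exists>p. is_walk V E p \<and> hd p = u \<and> last p = v)"

definition has_cycle :: "'v set \<Rightarrow> 'v set set \<Rightarrow> bool" where
  "has_cycle V E \<longleftrightarrow>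
     (\<exists>p. is_walk V E p \<and> distinct p \<and> length p \<ge> 3 \<and> {last p, hd p} \<in> E)"

definition is_tree :: "'v set \<Rightarrow> 'v set set \<Rightarrow> bool" where
  "is_tree V E \<longleftrightarrow> finite V \<and> V \<noteq> {} \<and> simple_graph V E \<and>
     connected_graph V E \<and> \<not> has_cycle V E"

definition degree :: "'v set set \<Rightarrow> 'v \<Rightarrow> nat" where
  "degree E v = card {e\<in>E. v \<in> e}"

definition is_cutpoint :: "'v set \<Rightarrow> 'v set set \<Rightarrow> 'v \<Rightarrow> bool" where
  "is_cutpoint V E v \<longleftrightarrow> v \<in> V \<and>
     \<not> connected_graph (V - {v}) {e\<in>E. v \<notin> e}"

definition is_chordless_path :: "'v set \<Rightarrow> 'v set set \<Rightarrow> bool" where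
  "is_chordless_path V E \<longleftrightarrow>
     (\<exists>p. distinct p \<and> set p = V \<and> E = {{p ! i, p ! Suc i} | i. Suc i < length p})"

definition is_caterpillar :: "'v set \<Rightarrow> 'v set set \<Rightarrow> bool" where
  "is_caterpillar V E \<longleftrightarrow> is_tree V E \<and>
     (let V' = {v\<in>V. degree E v \<noteq> 1} in is_chordless_path V' {e\<in>E. e \<subseteq> V'})"

section \<open>Polynomial ring k[x_i : i \<in> X] inside the type of finitely supported polynomials\<close>

type_synonym ('x, 'k) mpoly = "('x \<Rightarrow>\<^sub>0 nat) \<Rightarrow>\<^sub>0 'k"

definition poly_ring :: "'x set \<Rightarrow> ('x, 'k::comm_ring_1) mpoly set" where
  "poly_ring X = {p. \<forall>m\<in>Poly_Mapping.keys p. Poly_Mapping.keys m \<subseteq> X}"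

definition pvar :: "'x \<Rightarrow> ('x, 'k::comm_ring_1) mpoly" where
  "pvar x = Poly_Mapping.single (Poly_Mapping.single x 1) 1"

definition ideal_in :: "'a::comm_ring_1 set \<Rightarrow> 'a set \<Rightarrow> bool" where
  "ideal_in S I \<longleftrightarrow> I \<subseteq> S \<and> 0 \<in> I \<and> (\<forall>a\<in>I. \<forall>b\<in>I. a + b \<in> I) \<and>
     (\<forall>r\<in>S. \<forall>a\<in>I. r * a \<in> I)"

definition gen_ideal :: "'a::comm_ring_1 set \<Rightarrow> 'a set \<Rightarrow> 'a set" where
  "gen_ideal S G = \<Inter>{I. ideal_in S I \<and> G \<subseteq> I}"

definition prime_ideal_in :: "'a::comm_ring_1 set \<Rightarrow> 'a set \<Rightarrow> bool" where
  "prime_ideal_in S P \<longleftrightarrow> ideal_in S P \<and> P \<noteq> S \<and>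
     (\<forall>a\<in>S. \<forall>b\<in>S. a * b \<in> P \<longrightarrow> a \<in> P \<or> b \<in> P)"

(* Krull dimension of S/I: supremum of lengths n of strict chains P_0 \<subset> ... \<subset> P_n
   of prime ideals of S/I, i.e. of prime ideals of S containing I *)
definition krull_dim_quot :: "'a::comm_ring_1 set \<Rightarrow> 'a set \<Rightarrow> enat" where
  "krull_dim_quot S I = Sup (enat ` {n. \<exists>P :: nat \<Rightarrow> 'a set.
       (\<forall>i\<le>n. prime_ideal_in S (P i) \<and> I \<subseteq> P i) \<and> (\<forall>i<n. P i \<subset> P (Suc i))})"

definition line_graph_edge_ideal :: "'v set set \<Rightarrow> ('v set, 'k::comm_ring_1) mpoly set" where
  "line_graph_edge_ideal E = gen_ideal (poly_ring E)
     {pvar f * pvar g | f g. f \<in> E \<and> g \<in> E \<and> f \<noteq> g \<and> f \<inter> g \<noteq> {}}"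

end

(*
  Upper bound: the edges whose variables lie outside a prime P over I(L(T)) pairwise do not
  meet, and when |V| >= 3 every edge contains a cutpoint, so at most s variables lie outside P.
  A chain of primes above an ideal containing all but s variables has length at most s: the
  dimension of the image in k[X]/P of the polynomials with all exponents at most N grows like
  N^d, with d <= s at the bottom of the chain, and d drops along every strict inclusion of
  primes.

  Lower bound: in a caterpillar every vertex of degree at least three has a leaf neighbour,
  which yields a matching of s edges. Removing its edges one at a time from E gives a chain of
  s + 1 primes generated by variables, each containing I(L(T)) because two edges of the
  matching never meet.
*)

theory Submission
  imports Defs "HOL-Library.FuncSet"
begin

section \<open>Polynomial rings over a set of variables\<close>

lemma poly_ring_iff: "p \<in> poly_ring X \<longleftrightarrow> (\<forall>m\<in>Poly_Mapping.keys p. Poly_Mapping.keys m \<subseteq> X)"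
  by (simp add: poly_ring_def)

lemma keys_add_nat:
  "Poly_Mapping.keys ((m::'x \<Rightarrow>\<^sub>0 nat) + n) = Poly_Mapping.keys m \<union> Poly_Mapping.keys n"
  by (auto simp: in_keys_iff lookup_add)

lemma poly_ring_single: "Poly_Mapping.keys m \<subseteq> X \<Longrightarrow> Poly_Mapping.single m c \<in> poly_ring X"
  by (simp add: poly_ring_iff)

lemma poly_ring_const: "Poly_Mapping.single 0 c \<in> poly_ring X"
  by (simp add: poly_ring_single)

lemma poly_ring_zero: "0 \<in> poly_ring X"
  by (simp add: poly_ring_iff)

lemma poly_ring_one: "1 \<in> poly_ring X"
  by (simp add: poly_ring_iff)

lemma poly_ring_pvar: "x \<in> X \<Longrightarrow> pvar x \<in> poly_ring X"
  unfolding pvar_def by (simp add: poly_ring_single)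

lemma poly_ring_add: "p \<in> poly_ring X \<Longrightarrow> q \<in> poly_ring X \<Longrightarrow> p + q \<in> poly_ring X"
  unfolding poly_ring_iff using keys_add[of p q] by blast

lemma poly_ring_mult: "p \<in> poly_ring X \<Longrightarrow> q \<in> poly_ring X \<Longrightarrow> p * q \<in> poly_ring X"
  unfolding poly_ring_iff using keys_mult[of p q] by (fastforce simp: keys_add_nat)

lemma poly_ring_sum: "(\<And>i. i \<in> A \<Longrightarrow> f i \<in> poly_ring X) \<Longrightarrow> sum f A \<in> poly_ring X"
  by (induct A rule: infinite_finite_induct) (simp_all add: poly_ring_zero poly_ring_add)

lemma ideal_in_subset: "ideal_in S I \<Longrightarrow> I \<subseteq> S"
  by (simp add: ideal_in_def)

lemma ideal_in_mult: "ideal_in S I \<Longrightarrow> r \<in> S \<Longrightarrow> a \<in> I \<Longrightarrow> r * a \<in> I"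
  by (simp add: ideal_in_def)

lemma ideal_in_add: "ideal_in S I \<Longrightarrow> a \<in> I \<Longrightarrow> b \<in> I \<Longrightarrow> a + b \<in> I"
  by (simp add: ideal_in_def)

lemma ideal_in_sum: "ideal_in S I \<Longrightarrow> (\<And>i. i \<in> A \<Longrightarrow> f i \<in> I) \<Longrightarrow> sum f A \<in> I"
  by (induct A rule: infinite_finite_induct) (auto simp: ideal_in_def)

lemma ideal_in_poly_ring_diff:
  assumes "ideal_in (poly_ring X) I" "a \<in> I" "b \<in> I"
  shows "a - b \<in> (I :: ('x, 'k::comm_ring_1) mpoly set)"
proof -
  have "Poly_Mapping.single 0 (-1) * b \<in> I"
    using assms(1) poly_ring_const assms(3) by (rule ideal_in_mult)
  then have "a + Poly_Mapping.single 0 (-1) * b \<in> I"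
    using assms(1,2) by (intro ideal_in_add)
  then show ?thesis
    by (simp add: single_uminus)
qed

lemma gen_ideal_least: "ideal_in S J \<Longrightarrow> G \<subseteq> J \<Longrightarrow> gen_ideal S G \<subseteq> J"
  unfolding gen_ideal_def by blast

lemma gen_ideal_gens: "G \<subseteq> gen_ideal S G"
  unfolding gen_ideal_def by blast

lift_definition restrict_keys :: "('a \<Rightarrow>\<^sub>0 'b::zero) \<Rightarrow> 'a set \<Rightarrow> 'a \<Rightarrow>\<^sub>0 'b"
  is "\<lambda>f Z x. if x \<in> Z then f x else 0"
  by (erule finite_subset[rotated]) auto

lemma lookup_restrict_keys:
  "Poly_Mapping.lookup (restrict_keys p Z) x = (if x \<in> Z then Poly_Mapping.lookup p x else 0)"
  by transfer simp

lemma keys_restrict_keys: "Poly_Mapping.keys (restrict_keys p Z) = Poly_Mapping.keys p \<inter> Z"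
  by (auto simp: in_keys_iff lookup_restrict_keys split: if_splits)

lemma restrict_keys_compl: "restrict_keys p (- Z) = p - restrict_keys p Z"
  by (rule poly_mapping_eqI) (simp add: lookup_minus lookup_restrict_keys)

lemma restrict_keys_eq_sum:
  "restrict_keys p Z = (\<Sum>m\<in>Poly_Mapping.keys p \<inter> Z. Poly_Mapping.single m (Poly_Mapping.lookup p m))"
  by (rule poly_mapping_eqI)
    (simp add: lookup_restrict_keys lookup_sum lookup_single when_def in_keys_iff)

lemma poly_ring_restrict_keys: "p \<in> poly_ring X \<Longrightarrow> restrict_keys p Z \<in> poly_ring X"
  by (simp add: poly_ring_iff keys_restrict_keys)

lemma lookup_mult_unique_decomposition:
  fixes a b :: "'m::comm_monoid_add \<Rightarrow>\<^sub>0 'k::comm_semiring_1"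
  assumes unique: "\<And>l q. l \<in> Poly_Mapping.keys a \<Longrightarrow> q \<in> Poly_Mapping.keys b \<Longrightarrow>
      l + q = l0 + q0 \<Longrightarrow> l = l0 \<and> q = q0"
  shows "Poly_Mapping.lookup (a * b) (l0 + q0) = Poly_Mapping.lookup a l0 * Poly_Mapping.lookup b q0"
proof -
  have "Poly_Mapping.lookup a l * (\<Sum>q. Poly_Mapping.lookup b q when l0 + q0 = l + q)
      = (Poly_Mapping.lookup a l0 * Poly_Mapping.lookup b q0 when l = l0)" for l
  proof (cases "l \<in> Poly_Mapping.keys a")
    case True
    have "(\<lambda>q. Poly_Mapping.lookup b q when l0 + q0 = l + q)
        = (\<lambda>q. (Poly_Mapping.lookup b q0 when l = l0) when q = q0)"
      using unique[OF True] by (force simp: fun_eq_iff when_def in_keys_iff)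
    then have "(\<Sum>q. Poly_Mapping.lookup b q when l0 + q0 = l + q)
        = (Poly_Mapping.lookup b q0 when l = l0)"
      by (simp only: Sum_any_when_equal)
    then show ?thesis
      by (simp add: when_def)
  next
    case False
    then show ?thesis
      by (auto simp: in_keys_iff when_def)
  qed
  then show ?thesis
    by (simp add: lookup_mult)
qed

text \<open>The variable type carries no order, so monomials are compared through an embedding into
  the linearly ordered monoid \<open>nat \<Rightarrow>\<^sub>0 nat\<close>.\<close>

lemma monomial_weight_exists:
  assumes "finite X"
  obtains w :: "('x \<Rightarrow>\<^sub>0 nat) \<Rightarrow> (nat \<Rightarrow>\<^sub>0 nat)"
  where "\<And>m n. w (m + n) = w m + w n" and "inj_on w {m. Poly_Mapping.keys m \<subseteq> X}"
proof -
  obtain f :: "'x \<Rightarrow> nat" where f: "inj_on f X"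
    using finite_imp_inj_to_nat_seg[OF assms] by blast
  define w :: "('x \<Rightarrow>\<^sub>0 nat) \<Rightarrow> (nat \<Rightarrow>\<^sub>0 nat)" where
    "w m = (\<Sum>x\<in>X. Poly_Mapping.single (f x) (Poly_Mapping.lookup m x))" for m
  have add: "w (m + n) = w m + w n" for m n
    by (simp add: w_def lookup_add single_add sum.distrib)
  have lookup_w: "Poly_Mapping.lookup (w m) (f x) = Poly_Mapping.lookup m x" if "x \<in> X" for m x
  proof -
    have "Poly_Mapping.lookup (w m) (f x) = (\<Sum>y\<in>X. Poly_Mapping.lookup m y when y = x)"
      unfolding w_def lookup_sum lookup_single
      by (intro sum.cong refl) (use f that in \<open>auto simp: when_def inj_on_def\<close>)
    then show ?thesis
      using that assms by (simp add: when_def)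
  qed
  have "inj_on w {m. Poly_Mapping.keys m \<subseteq> X}"
  proof (rule inj_onI, rule poly_mapping_eqI)
    fix m n x
    assume "m \<in> {m. Poly_Mapping.keys m \<subseteq> X}" "n \<in> {m. Poly_Mapping.keys m \<subseteq> X}" "w m = w n"
    then show "Poly_Mapping.lookup m x = Poly_Mapping.lookup n x"
      using lookup_w[of x m] lookup_w[of x n] by (metis in_keys_iff mem_Collect_eq subsetD)
  qed
  with add show thesis
    by (rule that)
qed

lemma poly_ring_mult_neq_0:
  fixes a b :: "('x, 'k::idom) mpoly"
  assumes "finite X" and ab: "a \<in> poly_ring X" "b \<in> poly_ring X" and "a \<noteq> 0" "b \<noteq> 0"
  shows "a * b \<noteq> 0"
proof -
  obtain w :: "('x \<Rightarrow>\<^sub>0 nat) \<Rightarrow> (nat \<Rightarrow>\<^sub>0 nat)"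
    where w_add: "\<And>m n. w (m + n) = w m + w n" and w_inj: "inj_on w {m. Poly_Mapping.keys m \<subseteq> X}"
    using monomial_weight_exists[OF \<open>finite X\<close>] by blast
  have heaviest: "\<exists>m0\<in>Poly_Mapping.keys p. \<forall>m\<in>Poly_Mapping.keys p. w m \<le> w m0"
    if "p \<noteq> 0" for p :: "('x, 'k) mpoly"
  proof -
    have "Max (w ` Poly_Mapping.keys p) \<in> w ` Poly_Mapping.keys p"
      using that by (intro Max_in) auto
    then obtain m0 where "m0 \<in> Poly_Mapping.keys p" "w m0 = Max (w ` Poly_Mapping.keys p)"
      by auto
    then show ?thesis
      by (metis Max_ge finite_imageI finite_keys imageI)
  qed
  obtain a0 where a0: "a0 \<in> Poly_Mapping.keys a" "\<And>l. l \<in> Poly_Mapping.keys a \<Longrightarrow> w l \<le> w a0"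
    using heaviest[OF \<open>a \<noteq> 0\<close>] by blast
  obtain b0 where b0: "b0 \<in> Poly_Mapping.keys b" "\<And>q. q \<in> Poly_Mapping.keys b \<Longrightarrow> w q \<le> w b0"
    using heaviest[OF \<open>b \<noteq> 0\<close>] by blast
  \<comment> \<open>The product of the heaviest terms of \<open>a\<close> and \<open>b\<close> cannot cancel.\<close>
  have "l = a0 \<and> q = b0"
    if l: "l \<in> Poly_Mapping.keys a" and q: "q \<in> Poly_Mapping.keys b" and lq: "l + q = a0 + b0" for l q
  proof -
    have "w l + w q = w a0 + w b0"
      using lq w_add by metis
    then have "w l = w a0"
      using a0(2)[OF l] b0(2)[OF q] add_less_le_mono[of "w l" "w a0" "w q" "w b0"]
      by (metis order_less_le)
    moreover have "l \<in> {m. Poly_Mapping.keys m \<subseteq> X}" "a0 \<in> {m. Poly_Mapping.keys m \<subseteq> X}"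
      using ab(1) l a0(1) by (auto simp: poly_ring_iff)
    ultimately have "l = a0"
      using w_inj by (simp add: inj_on_eq_iff)
    then show ?thesis
      using lq by simp
  qed
  then have "Poly_Mapping.lookup (a * b) (a0 + b0) = Poly_Mapping.lookup a a0 * Poly_Mapping.lookup b b0"
    by (rule lookup_mult_unique_decomposition)
  also have "\<dots> \<noteq> 0"
    using a0(1) b0(1) by (simp add: in_keys_iff)
  finally show ?thesis
    by auto
qed

section \<open>Ideals generated by variables\<close>

text \<open>The ideal of \<open>k[X]\<close> generated by the variables in \<open>A\<close>.\<close>

definition var_ideal :: "'x set \<Rightarrow> 'x set \<Rightarrow> ('x, 'k::comm_ring_1) mpoly set" where
  "var_ideal X A = {p \<in> poly_ring X. \<forall>m\<in>Poly_Mapping.keys p. Poly_Mapping.keys m \<inter> A \<noteq> {}}"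

lemma ideal_var_ideal: "ideal_in (poly_ring X) (var_ideal X A)"
  unfolding ideal_in_def
proof (intro conjI ballI)
  show "var_ideal X A \<subseteq> poly_ring X" "0 \<in> var_ideal X A"
    by (auto simp: var_ideal_def poly_ring_zero)
  show "a + b \<in> var_ideal X A" if "a \<in> var_ideal X A" "b \<in> var_ideal X A" for a b
    using that keys_add[of a b] by (auto simp: var_ideal_def poly_ring_add)
  show "r * a \<in> var_ideal X A" if "r \<in> poly_ring X" "a \<in> var_ideal X A" for r a
    using that keys_mult[of r a] by (fastforce simp: var_ideal_def poly_ring_mult keys_add_nat)
qed

lemma var_ideal_mono: "A \<subseteq> B \<Longrightarrow> var_ideal X A \<subseteq> var_ideal X B"
  unfolding var_ideal_def by blast

lemma pvar_in_var_ideal_iff: "x \<in> X \<Longrightarrow> pvar x \<in> var_ideal X A \<longleftrightarrow> x \<in> A"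
  by (auto simp: var_ideal_def pvar_def poly_ring_single)

lemma pvar_mult_in_var_ideal:
  assumes "x \<in> X" "y \<in> X" "x \<in> A \<or> y \<in> A"
  shows "pvar x * pvar y \<in> var_ideal X A"
proof -
  define m :: "'a \<Rightarrow>\<^sub>0 nat" where "m = Poly_Mapping.single x 1 + Poly_Mapping.single y 1"
  have eq: "pvar x * pvar y = Poly_Mapping.single m 1"
    by (simp add: pvar_def mult_single m_def)
  have "Poly_Mapping.keys m = {x, y}"
    by (auto simp: m_def keys_add_nat)
  then show ?thesis
    unfolding eq var_ideal_def using assms by (auto intro!: poly_ring_single)
qed

lemma var_ideal_iff_restrict_keys:
  "p \<in> poly_ring X \<Longrightarrow> p \<in> var_ideal X A \<longleftrightarrow> restrict_keys p {m. Poly_Mapping.keys m \<inter> A = {}} = 0"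
  by (auto simp: var_ideal_def simp flip: keys_eq_empty simp: keys_restrict_keys)

lemma diff_restrict_keys_in_var_ideal:
  "p \<in> poly_ring X \<Longrightarrow> p - restrict_keys p {m. Poly_Mapping.keys m \<inter> A = {}} \<in> var_ideal X A"
  by (auto simp: var_ideal_def keys_restrict_keys poly_ring_restrict_keys simp flip: restrict_keys_compl)

text \<open>Writing \<open>a = a\<^sub>0 + a\<^sub>1\<close> and \<open>b = b\<^sub>0 + b\<^sub>1\<close> with \<open>a\<^sub>0, b\<^sub>0\<close> free of the variables \<open>A\<close>
  and \<open>a\<^sub>1, b\<^sub>1\<close> in the ideal, \<open>a b \<in> var_ideal X A\<close> forces \<open>a\<^sub>0 b\<^sub>0 = 0\<close>.\<close>

lemma prime_var_ideal:
  fixes A :: "'x set"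
  assumes "finite X"
  shows "prime_ideal_in (poly_ring X) (var_ideal X A :: ('x, 'k::field) mpoly set)"
  unfolding prime_ideal_in_def
proof (intro conjI ballI impI)
  show I: "ideal_in (poly_ring X) (var_ideal X A :: ('x, 'k) mpoly set)"
    by (rule ideal_var_ideal)
  have "(1 :: ('x, 'k) mpoly) \<notin> var_ideal X A"
    by (simp add: var_ideal_def)
  then show "var_ideal X A \<noteq> (poly_ring X :: ('x, 'k) mpoly set)"
    using poly_ring_one by blast
  fix a b :: "('x, 'k) mpoly"
  assume a: "a \<in> poly_ring X" and b: "b \<in> poly_ring X" and ab: "a * b \<in> var_ideal X A"
  define Z :: "('x \<Rightarrow>\<^sub>0 nat) set" where "Z = {m. Poly_Mapping.keys m \<inter> A = {}}"
  define a0 b0 where "a0 = restrict_keys a Z" and "b0 = restrict_keys b Z"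
  have a0: "a0 \<in> poly_ring X" and b0: "b0 \<in> poly_ring X"
    using a b by (simp_all add: a0_def b0_def poly_ring_restrict_keys)
  have "a * b = a0 * b0 + (a0 * (b - b0) + (a - a0) * b)"
    by (simp add: algebra_simps)
  moreover have "a0 * (b - b0) + (a - a0) * b \<in> var_ideal X A"
  proof -
    have "a - a0 \<in> var_ideal X A" "b - b0 \<in> var_ideal X A"
      using diff_restrict_keys_in_var_ideal a b by (simp_all add: a0_def b0_def Z_def)
    then have "a0 * (b - b0) \<in> var_ideal X A" "b * (a - a0) \<in> var_ideal X A"
      using ideal_in_mult[OF I a0] ideal_in_mult[OF I b] by blast+
    then show ?thesis
      using ideal_in_add[OF I] by (simp add: mult.commute)
  qed
  ultimately have "a0 * b0 \<in> var_ideal X A"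
    using ideal_in_poly_ring_diff[OF I ab] by (metis add_diff_cancel_right')
  moreover have "Poly_Mapping.keys (a0 * b0) \<subseteq> Z"
  proof
    fix m
    assume "m \<in> Poly_Mapping.keys (a0 * b0)"
    then obtain u v where "m = u + v" "u \<in> Poly_Mapping.keys a0" "v \<in> Poly_Mapping.keys b0"
      using keys_mult by blast
    then show "m \<in> Z"
      by (simp add: a0_def b0_def Z_def keys_restrict_keys keys_add_nat Int_Un_distrib2)
  qed
  ultimately have "Poly_Mapping.keys (a0 * b0) = {}"
    unfolding var_ideal_def Z_def by blast
  then have "a0 = 0 \<or> b0 = 0"
    using poly_ring_mult_neq_0[OF assms a0 b0] by auto
  then show "a \<in> var_ideal X A \<or> b \<in> var_ideal X A"
    using var_ideal_iff_restrict_keys a b by (auto simp: a0_def b0_def Z_def)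
qed

section \<open>Lengths of chains of prime ideals\<close>

definition const_mult :: "'k::comm_ring_1 \<Rightarrow> ('x, 'k) mpoly \<Rightarrow> ('x, 'k) mpoly" where
  "const_mult c p = Poly_Mapping.single 0 c * p"

interpretation mpoly: vector_space "const_mult :: 'k::field \<Rightarrow> ('x, 'k) mpoly \<Rightarrow> ('x, 'k) mpoly"
proof
  fix a b :: 'k and p q :: "('x, 'k) mpoly"
  show "const_mult a (p + q) = const_mult a p + const_mult a q"
    by (simp add: const_mult_def distrib_left)
  show "const_mult (a + b) p = const_mult a p + const_mult b p"
    by (simp add: const_mult_def single_add distrib_right)
  show "const_mult a (const_mult b p) = const_mult (a * b) p"
    by (simp add: const_mult_def mult_single mult.assoc[symmetric])
  show "const_mult 1 p = p"
    by (simp add: const_mult_def)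
qed

lemma poly_ring_const_mult: "p \<in> poly_ring X \<Longrightarrow> const_mult c p \<in> poly_ring X"
  unfolding const_mult_def by (intro poly_ring_mult poly_ring_const)

lemma ideal_in_const_mult: "ideal_in (poly_ring X) I \<Longrightarrow> p \<in> I \<Longrightarrow> const_mult c p \<in> I"
  unfolding const_mult_def by (intro ideal_in_mult[of "poly_ring X"] poly_ring_const)

lemma ideal_in_const_neq_0:
  fixes I :: "('x, 'k::field) mpoly set"
  assumes I: "ideal_in (poly_ring X) I" "I \<noteq> poly_ring X" and "c \<noteq> 0"
  shows "Poly_Mapping.single 0 c \<notin> I"
proof
  assume "Poly_Mapping.single 0 c \<in> I"
  with I(1) have "const_mult (inverse c) (Poly_Mapping.single 0 c) \<in> I"
    by (rule ideal_in_const_mult)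
  then have one: "1 \<in> I"
    using \<open>c \<noteq> 0\<close> by (simp add: const_mult_def mult_single)
  have "r \<in> I" if "r \<in> poly_ring X" for r
    using ideal_in_mult[OF I(1) that one] by simp
  then show False
    using I ideal_in_subset by blast
qed

lemma monomial_in_ideal:
  assumes I: "ideal_in (poly_ring X) I" and "Poly_Mapping.keys m \<subseteq> X"
    and "x \<in> Poly_Mapping.keys m" and "pvar x \<in> I"
  shows "Poly_Mapping.single m c \<in> I"
proof -
  define m' where "m' = m - Poly_Mapping.single x (1::nat)"
  have "m = m' + Poly_Mapping.single x 1"
    using \<open>x \<in> Poly_Mapping.keys m\<close>
    by (intro poly_mapping_eqI) (auto simp: m'_def lookup_add lookup_minus lookup_single when_def in_keys_iff)
  then have "Poly_Mapping.single m c = Poly_Mapping.single m' c * pvar x"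
    by (simp add: pvar_def mult_single)
  moreover have "Poly_Mapping.keys m' \<subseteq> X"
    using \<open>Poly_Mapping.keys m \<subseteq> X\<close>
    by (auto simp: m'_def in_keys_iff lookup_minus lookup_single when_def split: if_splits)
  ultimately show ?thesis
    using ideal_in_mult[OF I poly_ring_single \<open>pvar x \<in> I\<close>] by simp
qed

definition bounded_monomials :: "'x set \<Rightarrow> nat \<Rightarrow> ('x \<Rightarrow>\<^sub>0 nat) set" where
  "bounded_monomials X N = {m. Poly_Mapping.keys m \<subseteq> X \<and> (\<forall>x. Poly_Mapping.lookup m x \<le> N)}"

definition bounded_polys :: "'x set \<Rightarrow> nat \<Rightarrow> ('x, 'k::comm_ring_1) mpoly set" where
  "bounded_polys X N = {p. Poly_Mapping.keys p \<subseteq> bounded_monomials X N}"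

lemma bounded_polys_subset_poly_ring: "bounded_polys X N \<subseteq> poly_ring X"
  unfolding bounded_polys_def bounded_monomials_def poly_ring_def by blast

lemma bounded_polys_mono: "N \<le> N' \<Longrightarrow> bounded_polys X N \<subseteq> bounded_polys X N'"
  unfolding bounded_polys_def bounded_monomials_def using le_trans by blast

lemma bounded_polys_mult:
  assumes "p \<in> bounded_polys X N1" "q \<in> bounded_polys X N2"
  shows "p * q \<in> bounded_polys X (N1 + N2)"
  unfolding bounded_polys_def
proof (intro CollectI subsetI)
  fix m
  assume "m \<in> Poly_Mapping.keys (p * q)"
  then obtain u v where "m = u + v" "u \<in> Poly_Mapping.keys p" "v \<in> Poly_Mapping.keys q"
    using keys_mult[of p q] by blast
  then show "m \<in> bounded_monomials X (N1 + N2)"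
    using assms by (fastforce simp: bounded_polys_def bounded_monomials_def keys_add_nat lookup_add intro: add_mono)
qed

lemma poly_ring_imp_bounded_polys:
  assumes "p \<in> poly_ring X"
  shows "\<exists>N. p \<in> bounded_polys X N"
proof -
  define N where "N = (\<Sum>m\<in>Poly_Mapping.keys p. \<Sum>x\<in>Poly_Mapping.keys m. Poly_Mapping.lookup m x)"
  have "Poly_Mapping.lookup m x \<le> N" if "m \<in> Poly_Mapping.keys p" for m x
  proof (cases "x \<in> Poly_Mapping.keys m")
    case True
    have "Poly_Mapping.lookup m x \<le> (\<Sum>x\<in>Poly_Mapping.keys m. Poly_Mapping.lookup m x)"
      using True by (intro member_le_sum) auto
    also have "\<dots> \<le> N"
      unfolding N_def using that
      by (intro member_le_sum[where f = "\<lambda>m. \<Sum>x\<in>Poly_Mapping.keys m. Poly_Mapping.lookup m x"]) auto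
    finally show ?thesis .
  qed (simp add: in_keys_iff)
  then have "p \<in> bounded_polys X N"
    using assms by (auto simp: bounded_polys_def bounded_monomials_def poly_ring_iff)
  then show ?thesis ..
qed

lemma
  assumes "finite X"
  shows finite_bounded_monomials: "finite (bounded_monomials X N)"
    and card_bounded_monomials_le: "card (bounded_monomials X N) \<le> (N + 1) ^ card X"
proof -
  let ?g = "\<lambda>m. restrict (Poly_Mapping.lookup m) X"
  have inj: "inj_on ?g (bounded_monomials X N)"
  proof (rule inj_onI)
    fix m m'
    assume mm': "m \<in> bounded_monomials X N" "m' \<in> bounded_monomials X N" and eq: "?g m = ?g m'"
    show "m = m'"
    proof (rule poly_mapping_eqI)
      fix x
      show "Poly_Mapping.lookup m x = Poly_Mapping.lookup m' x"
      proof (cases "x \<in> X")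
        case True
        then show ?thesis
          using fun_cong[OF eq, of x] by simp
      next
        case False
        then show ?thesis
          using mm' by (metis (no_types, lifting) bounded_monomials_def in_keys_iff mem_Collect_eq subsetD)
      qed
    qed
  qed
  have into: "?g ` bounded_monomials X N \<subseteq> PiE X (\<lambda>_. {..N})"
    by (auto simp: bounded_monomials_def)
  have fin: "finite (PiE X (\<lambda>_. {..N}))"
    using assms by (simp add: finite_PiE)
  show "finite (bounded_monomials X N)"
    using inj into fin by (rule inj_on_finite)
  have "card (bounded_monomials X N) \<le> card (PiE X (\<lambda>_. {..N}))"
    using inj into fin by (rule card_inj_on_le)
  then show "card (bounded_monomials X N) \<le> (N + 1) ^ card X"
    using assms by (simp add: card_PiE)
qed

lemma sum_lessThan_add:
  fixes m n :: nat
  shows "(\<Sum>i<m + n. f i) = (\<Sum>i<m. f i) + (\<Sum>j<n. f (m + j))"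
  by (induct n) (simp_all add: add.assoc)

lemma mpoly_family_card_le:
  fixes r :: "nat \<Rightarrow> ('x, 'k::field) mpoly"
  assumes "finite T" and span: "\<forall>i<n. r i \<in> mpoly.span T"
    and indep: "\<And>c. (\<Sum>i<n. const_mult (c i) (r i)) = 0 \<Longrightarrow> \<forall>i<n. c i = 0"
  shows "n \<le> card T"
proof -
  have inj: "inj_on r {..<n}"
  proof (rule inj_onI, rule ccontr)
    fix i j
    assume i: "i \<in> {..<n}" and j: "j \<in> {..<n}" and eq: "r i = r j" and "i \<noteq> j"
    define c :: "nat \<Rightarrow> 'k" where "c k = (if k = i then 1 else if k = j then -1 else 0)" for k
    have "const_mult (c k) (r k) = (if k = i then r k else 0) - (if k = j then r k else 0)" for k
      using \<open>i \<noteq> j\<close> by (simp add: c_def const_mult_def single_uminus)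
    then have "(\<Sum>k<n. const_mult (c k) (r k)) = r i - r j"
      using i j by (simp add: sum_subtractf)
    then have "c i = 0"
      using indep eq i by simp
    then show False
      by (simp add: c_def)
  qed
  have "mpoly.independent (r ` {..<n})"
  proof (rule mpoly.independent_if_scalars_zero)
    fix f :: "('x, 'k) mpoly \<Rightarrow> 'k" and p
    assume zero: "(\<Sum>p\<in>r ` {..<n}. const_mult (f p) p) = 0" and "p \<in> r ` {..<n}"
    have "(\<Sum>i<n. const_mult (f (r i)) (r i)) = 0"
      using zero by (simp add: sum.reindex[OF inj])
    then show "f p = 0"
      using indep[of "\<lambda>i. f (r i)"] \<open>p \<in> r ` {..<n}\<close> by auto
  qed simp
  then have "card (r ` {..<n}) \<le> card T"
    using mpoly.independent_span_bound[OF \<open>finite T\<close>] span by blast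
  then show ?thesis
    using inj by (simp add: card_image)
qed

definition lin_indep_mod :: "('x, 'k::field) mpoly set \<Rightarrow> (nat \<Rightarrow> ('x, 'k) mpoly) \<Rightarrow> nat \<Rightarrow> bool" where
  "lin_indep_mod P b n \<longleftrightarrow> (\<forall>c. (\<Sum>i<n. const_mult (c i) (b i)) \<in> P \<longrightarrow> (\<forall>i<n. c i = 0))"

text \<open>\<open>indep_mod_bounded X P N n\<close> says that the image of \<open>bounded_polys X N\<close> in \<open>k[X]/P\<close>
  has dimension at least \<open>n\<close>; \<open>growth_le X P d\<close> says that this dimension is \<open>O(N\<^sup>d)\<close>.\<close>

definition indep_mod_bounded :: "'x set \<Rightarrow> ('x, 'k::field) mpoly set \<Rightarrow> nat \<Rightarrow> nat \<Rightarrow> bool" where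
  "indep_mod_bounded X P N n \<longleftrightarrow> (\<exists>b. (\<forall>i<n. b i \<in> bounded_polys X N) \<and> lin_indep_mod P b n)"

definition growth_le :: "'x set \<Rightarrow> ('x, 'k::field) mpoly set \<Rightarrow> nat \<Rightarrow> bool" where
  "growth_le X P d \<longleftrightarrow> (\<exists>C. \<forall>N n. indep_mod_bounded X P N n \<longrightarrow> n \<le> C * (N + 1) ^ d)"

lemma indep_mod_bounded_zero: "indep_mod_bounded X P N 0"
  by (simp add: indep_mod_bounded_def lin_indep_mod_def)

lemma indep_mod_bounded_one:
  fixes P :: "('x, 'k::field) mpoly set"
  assumes "ideal_in (poly_ring X) P" "P \<noteq> poly_ring X"
  shows "indep_mod_bounded X P N 1"
proof -
  have "lin_indep_mod P (\<lambda>_. 1) 1"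
    using ideal_in_const_neq_0[OF assms]
    by (auto simp: lin_indep_mod_def const_mult_def)
  moreover have "(1 :: ('x, 'k) mpoly) \<in> bounded_polys X N"
    by (simp add: bounded_polys_def bounded_monomials_def)
  ultimately show ?thesis
    unfolding indep_mod_bounded_def by (intro exI[of _ "\<lambda>_. 1"]) simp
qed

lemma lin_indep_mod_append:
  fixes P Q :: "('x, 'k::field) mpoly set"
  assumes P: "prime_ideal_in (poly_ring X) P" and Q: "ideal_in (poly_ring X) Q" and "P \<subseteq> Q"
    and f: "f \<in> Q" "f \<notin> P" and b1: "\<forall>i<m1. b1 i \<in> poly_ring X"
    and indep1: "lin_indep_mod P b1 m1" and indep2: "lin_indep_mod Q b2 m2"
  shows "lin_indep_mod P (\<lambda>i. if i < m1 then f * b1 i else b2 (i - m1)) (m1 + m2)"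
  unfolding lin_indep_mod_def
proof (intro allI impI)
  fix c :: "nat \<Rightarrow> 'k" and i
  assume comb: "(\<Sum>i<m1 + m2. const_mult (c i) (if i < m1 then f * b1 i else b2 (i - m1))) \<in> P"
    and i: "i < m1 + m2"
  define Y where "Y = (\<Sum>i<m1. const_mult (c i) (b1 i))"
  define Z where "Z = (\<Sum>j<m2. const_mult (c (m1 + j)) (b2 j))"
  have sum_eq: "(\<Sum>i<m1 + m2. const_mult (c i) (if i < m1 then f * b1 i else b2 (i - m1))) = f * Y + Z"
    unfolding sum_lessThan_add Y_def Z_def
    by (simp add: const_mult_def sum_distrib_left mult.left_commute)
  have "f \<in> poly_ring X"
    using f(1) Q ideal_in_subset by blast
  have "Y \<in> poly_ring X"
    unfolding Y_def using b1 by (intro poly_ring_sum poly_ring_const_mult) simp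
  have "f * Y \<in> Q"
    using ideal_in_mult[OF Q \<open>Y \<in> poly_ring X\<close> f(1)] by (simp add: mult.commute)
  moreover have "f * Y + Z \<in> Q"
    using comb sum_eq \<open>P \<subseteq> Q\<close> by auto
  ultimately have "Z \<in> Q"
    using ideal_in_poly_ring_diff[OF Q] by (metis add_diff_cancel_left')
  then have c2: "\<forall>j<m2. c (m1 + j) = 0"
    using indep2 unfolding lin_indep_mod_def Z_def by (auto dest: spec[of _ "\<lambda>j. c (m1 + j)"])
  then have "f * Y \<in> P"
    using comb sum_eq by (simp add: Z_def)
  then have "Y \<in> P"
    using P \<open>f \<in> poly_ring X\<close> \<open>Y \<in> poly_ring X\<close> f(2) unfolding prime_ideal_in_def by blast
  then have "\<forall>i<m1. c i = 0"
    using indep1 unfolding lin_indep_mod_def Y_def by blast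
  then show "c i = 0"
    using c2 i by (cases "i < m1") (auto dest: spec[of _ "i - m1"])
qed

lemma indep_mod_bounded_add:
  fixes P Q :: "('x, 'k::field) mpoly set"
  assumes P: "prime_ideal_in (poly_ring X) P" and Q: "ideal_in (poly_ring X) Q" and "P \<subseteq> Q"
    and f: "f \<in> Q" "f \<notin> P" "f \<in> bounded_polys X e"
    and ind1: "indep_mod_bounded X P N1 m1" and ind2: "indep_mod_bounded X Q N2 m2"
    and N: "N1 + e \<le> N" "N2 \<le> N"
  shows "indep_mod_bounded X P N (m1 + m2)"
proof -
  obtain b1 where b1: "\<forall>i<m1. b1 i \<in> bounded_polys X N1" "lin_indep_mod P b1 m1"
    using ind1 by (auto simp: indep_mod_bounded_def)
  obtain b2 where b2: "\<forall>i<m2. b2 i \<in> bounded_polys X N2" "lin_indep_mod Q b2 m2"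
    using ind2 by (auto simp: indep_mod_bounded_def)
  define b where "b i = (if i < m1 then f * b1 i else b2 (i - m1))" for i
  have "b i \<in> bounded_polys X N" if "i < m1 + m2" for i
  proof (cases "i < m1")
    case True
    then have "b i \<in> bounded_polys X (e + N1)"
      using bounded_polys_mult[OF f(3)] b1(1) by (simp add: b_def)
    then show ?thesis
      using bounded_polys_mono[of "e + N1" N] N by auto
  next
    case False
    then have "b i \<in> bounded_polys X N2"
      using that b2(1) by (simp add: b_def)
    then show ?thesis
      using bounded_polys_mono[OF N(2)] by blast
  qed
  moreover have "lin_indep_mod P b (m1 + m2)"
    unfolding b_def using P Q \<open>P \<subseteq> Q\<close> f(1,2) _ b1(2) b2(2)
  proof (rule lin_indep_mod_append)
    show "\<forall>i<m1. b1 i \<in> poly_ring X"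
      using b1(1) bounded_polys_subset_poly_ring by blast
  qed
  ultimately show ?thesis
    unfolding indep_mod_bounded_def by blast
qed

lemma indep_mod_bounded_mult:
  fixes P Q :: "('x, 'k::field) mpoly set"
  assumes P: "prime_ideal_in (poly_ring X) P" and Q: "ideal_in (poly_ring X) Q" and "P \<subseteq> Q"
    and f: "f \<in> Q" "f \<notin> P" "f \<in> bounded_polys X e"
    and ind: "indep_mod_bounded X Q N m"
  shows "indep_mod_bounded X P (N + L * e) (L * m)"
proof (induct L)
  case 0
  show ?case
    by (simp add: indep_mod_bounded_zero)
next
  case (Suc L)
  have "indep_mod_bounded X P (N + Suc L * e) (L * m + m)"
    using P Q \<open>P \<subseteq> Q\<close> f Suc ind by (rule indep_mod_bounded_add) auto
  then show ?case
    by (simp add: add.commute)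
qed

lemma diff_restrict_keys_in_ideal:
  assumes P: "ideal_in (poly_ring X) P" and vars: "\<forall>x\<in>X - F. pvar x \<in> P"
    and "p \<in> poly_ring X"
  shows "p - restrict_keys p {m. Poly_Mapping.keys m \<subseteq> F} \<in> P"
proof -
  have "p - restrict_keys p {m. Poly_Mapping.keys m \<subseteq> F}
      = restrict_keys p (- {m. Poly_Mapping.keys m \<subseteq> F})"
    by (simp add: restrict_keys_compl)
  also have "\<dots> \<in> P"
    unfolding restrict_keys_eq_sum
  proof (rule ideal_in_sum[OF P])
    fix m
    assume m: "m \<in> Poly_Mapping.keys p \<inter> - {m. Poly_Mapping.keys m \<subseteq> F}"
    then have "Poly_Mapping.keys m \<subseteq> X"
      using \<open>p \<in> poly_ring X\<close> by (auto simp: poly_ring_iff)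
    moreover obtain x where "x \<in> Poly_Mapping.keys m" "x \<notin> F"
      using m by auto
    ultimately show "Poly_Mapping.single m (Poly_Mapping.lookup p m) \<in> P"
      using vars by (blast intro: monomial_in_ideal[OF P])
  qed
  finally show ?thesis .
qed

lemma restrict_keys_in_span_bounded_monomials:
  assumes "p \<in> bounded_polys X N"
  shows "restrict_keys p {m. Poly_Mapping.keys m \<subseteq> F}
    \<in> mpoly.span ((\<lambda>m. Poly_Mapping.single m 1) ` bounded_monomials F N)"
proof -
  have "restrict_keys p {m. Poly_Mapping.keys m \<subseteq> F}
      = (\<Sum>m\<in>Poly_Mapping.keys p \<inter> {m. Poly_Mapping.keys m \<subseteq> F}.
          const_mult (Poly_Mapping.lookup p m) (Poly_Mapping.single m 1))"
    by (simp add: restrict_keys_eq_sum const_mult_def mult_single)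
  also have "\<dots> \<in> mpoly.span ((\<lambda>m. Poly_Mapping.single m 1) ` bounded_monomials F N)"
  proof (intro mpoly.span_sum mpoly.span_scale mpoly.span_base)
    fix m
    assume "m \<in> Poly_Mapping.keys p \<inter> {m. Poly_Mapping.keys m \<subseteq> F}"
    then have "m \<in> bounded_monomials F N"
      using assms by (auto simp: bounded_polys_def bounded_monomials_def)
    then show "Poly_Mapping.single m 1 \<in> (\<lambda>m. Poly_Mapping.single m 1) ` bounded_monomials F N"
      by simp
  qed
  finally show ?thesis .
qed

text \<open>Modulo the variables outside \<open>F\<close>, every polynomial is congruent to its part in the
  variables \<open>F\<close>, and the exponent-bounded such parts span a space of dimension
  \<open>(N + 1) ^ card F\<close>.\<close>

lemma growth_le_card:
  fixes P :: "('x, 'k::field) mpoly set"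
  assumes "finite X" "F \<subseteq> X" and P: "ideal_in (poly_ring X) P"
    and vars: "\<forall>x\<in>X - F. pvar x \<in> P"
  shows "growth_le X P (card F)"
  unfolding growth_le_def
proof (intro exI allI impI)
  fix N n
  assume "indep_mod_bounded X P N n"
  then obtain b where b: "\<forall>i<n. b i \<in> bounded_polys X N" "lin_indep_mod P b n"
    by (auto simp: indep_mod_bounded_def)
  define T where "T = (\<lambda>m. Poly_Mapping.single m (1::'k)) ` bounded_monomials F N"
  define r where "r i = restrict_keys (b i) {m. Poly_Mapping.keys m \<subseteq> F}" for i
  have diff_in_P: "b i - r i \<in> P" if "i < n" for i
    using diff_restrict_keys_in_ideal[OF P vars] b(1) that bounded_polys_subset_poly_ring
    unfolding r_def by blast
  have "finite F"
    using assms(1,2) by (rule finite_subset[rotated])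
  then have "finite T"
    using finite_bounded_monomials[OF \<open>finite F\<close>] by (simp add: T_def)
  moreover have "\<forall>i<n. r i \<in> mpoly.span T"
    using b(1) unfolding r_def T_def by (blast intro: restrict_keys_in_span_bounded_monomials)
  moreover have "\<forall>i<n. c i = 0" if "(\<Sum>i<n. const_mult (c i) (r i)) = 0" for c
  proof -
    have "(\<Sum>i<n. const_mult (c i) (b i))
        = (\<Sum>i<n. const_mult (c i) (b i - r i)) + (\<Sum>i<n. const_mult (c i) (r i))"
      by (simp add: sum.distrib[symmetric] const_mult_def algebra_simps)
    also have "\<dots> \<in> P"
      using that by simp (intro ideal_in_sum[OF P] ideal_in_const_mult[OF P] diff_in_P, simp)
    finally show ?thesis
      using b(2) by (simp add: lin_indep_mod_def)
  qed
  ultimately have "n \<le> card T"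
    by (rule mpoly_family_card_le)
  also have "\<dots> \<le> card (bounded_monomials F N)"
    using finite_bounded_monomials[OF \<open>finite F\<close>] by (simp add: T_def card_image_le)
  also have "\<dots> \<le> 1 * (N + 1) ^ card F"
    using card_bounded_monomials_le[OF \<open>finite F\<close>] by simp
  finally show "n \<le> 1 * (N + 1) ^ card F" .
qed

text \<open>Multiplying by an element of \<open>Q - P\<close> turns \<open>m\<close> independent elements modulo \<open>Q\<close> into
  \<open>L * m\<close> independent elements modulo \<open>P\<close>; hence the growth degree drops along a strict
  inclusion of primes.\<close>

lemma growth_le_prime_step:
  fixes P Q :: "('x, 'k::field) mpoly set"
  assumes P: "prime_ideal_in (poly_ring X) P" and Q: "prime_ideal_in (poly_ring X) Q"
    and "P \<subset> Q" and "growth_le X P d"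
  shows "0 < d \<and> growth_le X Q (d - 1)"
proof -
  obtain C where C: "\<And>N n. indep_mod_bounded X P N n \<Longrightarrow> n \<le> C * (N + 1) ^ d"
    using \<open>growth_le X P d\<close> by (auto simp: growth_le_def)
  obtain f where f: "f \<in> Q" "f \<notin> P"
    using \<open>P \<subset> Q\<close> by blast
  have QI: "ideal_in (poly_ring X) Q" "Q \<noteq> poly_ring X"
    using Q by (simp_all add: prime_ideal_in_def)
  then obtain e where e: "f \<in> bounded_polys X e"
    using f(1) poly_ring_imp_bounded_polys ideal_in_subset by blast
  have bound: "(N + 1) * m \<le> C * (e + 1) ^ d * (N + 1) ^ d" if "indep_mod_bounded X Q N m" for N m
  proof -
    have "indep_mod_bounded X P (N + (N + 1) * e) ((N + 1) * m)"
      using P QI(1) \<open>P \<subset> Q\<close> f e that by (intro indep_mod_bounded_mult) auto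
    then have "(N + 1) * m \<le> C * (N + (N + 1) * e + 1) ^ d"
      by (rule C)
    also have "N + (N + 1) * e + 1 = (N + 1) * (e + 1)"
      by (simp add: algebra_simps)
    finally have "(N + 1) * m \<le> C * ((N + 1) * (e + 1)) ^ d" .
    then show ?thesis
      by (simp only: power_mult_distrib mult_ac)
  qed
  have "0 < d"
  proof (rule ccontr)
    assume "\<not> 0 < d"
    then show False
      using bound[OF indep_mod_bounded_one[OF QI], of C] by simp
  qed
  moreover have "growth_le X Q (d - 1)"
    unfolding growth_le_def
  proof (intro exI allI impI)
    fix N m
    assume "indep_mod_bounded X Q N m"
    then have "(N + 1) * m \<le> (N + 1) * (C * (e + 1) ^ d * (N + 1) ^ (d - 1))"
      using bound \<open>0 < d\<close> by (metis mult.left_commute power_eq_if not_gr0)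
    then show "m \<le> C * (e + 1) ^ d * (N + 1) ^ (d - 1)"
      by (metis Suc_eq_plus1 Suc_mult_le_cancel1)
  qed
  ultimately show ?thesis ..
qed

lemma prime_chain_length_le:
  fixes P :: "nat \<Rightarrow> ('x, 'k::field) mpoly set"
  assumes "finite X" "F \<subseteq> X"
    and primes: "\<forall>i\<le>n. prime_ideal_in (poly_ring X) (P i)"
    and chain: "\<forall>i<n. P i \<subset> P (Suc i)"
    and vars: "\<forall>x\<in>X - F. pvar x \<in> P 0"
  shows "n \<le> card F"
proof -
  have "j \<le> card F \<and> growth_le X (P j) (card F - j)" if "j \<le> n" for j
    using that
  proof (induct j)
    case 0
    show ?case
      using growth_le_card[OF assms(1,2) _ vars] primes by (simp add: prime_ideal_in_def)
  next
    case (Suc j)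
    have "prime_ideal_in (poly_ring X) (P j)" "prime_ideal_in (poly_ring X) (P (Suc j))"
      and "P j \<subset> P (Suc j)" and "growth_le X (P j) (card F - j)"
      using primes chain Suc by simp_all
    then have "0 < card F - j \<and> growth_le X (P (Suc j)) (card F - j - 1)"
      by (rule growth_le_prime_step)
    then show ?case
      by (simp add: Suc_le_eq)
  qed
  then show ?thesis
    by blast
qed

section \<open>Trees and caterpillars\<close>

lemma simple_graph_edge_other_end:
  assumes "simple_graph V E" "e \<in> E" "x \<in> e"
  obtains y where "e = {x, y}" "y \<noteq> x" "x \<in> V" "y \<in> V"
proof -
  obtain u v where "e = {u, v}" "u \<noteq> v" "u \<in> V" "v \<in> V"
    using assms(1,2) by (auto simp: simple_graph_def)
  then show thesis
    using that assms(3) by (metis empty_iff insert_commute insert_iff)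
qed

lemma is_walk_singleton: "is_walk V E [x] \<longleftrightarrow> x \<in> V"
  by (simp add: is_walk_def)

lemma is_walk_Cons_Cons:
  "is_walk V E (x # y # xs) \<longleftrightarrow> x \<in> V \<and> {x, y} \<in> E \<and> is_walk V E (y # xs)"
  unfolding is_walk_def by (auto simp: less_Suc_eq_0_disj)

lemma is_walk_Cons_in: "is_walk V E (y # zs) \<Longrightarrow> y \<in> V"
  by (simp add: is_walk_def)

lemma is_walk_append:
  "is_walk V E (xs @ y # zs) \<longleftrightarrow> is_walk V E (xs @ [y]) \<and> is_walk V E (y # zs)"
proof (induct xs)
  case Nil
  then show ?case
    by (auto simp: is_walk_singleton dest: is_walk_Cons_in)
next
  case (Cons a xs)
  then show ?case
    by (cases xs) (auto simp: is_walk_Cons_Cons is_walk_singleton dest: is_walk_Cons_in)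
qed

lemma is_walk_mono: "is_walk V' E' p \<Longrightarrow> V' \<subseteq> V \<Longrightarrow> E' \<subseteq> E \<Longrightarrow> is_walk V E p"
  unfolding is_walk_def by blast

lemma is_walk_distinct:
  assumes "is_walk V E p"
  shows "\<exists>q. is_walk V E q \<and> distinct q \<and> hd q = hd p \<and> last q = last p"
  using assms
proof (induct "length p" arbitrary: p rule: less_induct)
  case less
  show ?case
  proof (cases "distinct p")
    case True
    then show ?thesis
      using less.prems by blast
  next
    case False
    then obtain ys y zs ws where p: "p = ys @ [y] @ zs @ [y] @ ws"
      using not_distinct_decomp by blast
    define p' where "p' = ys @ y # ws"
    have "is_walk V E p'"
      using less.prems is_walk_append[of V E ys y "zs @ y # ws"]
        is_walk_append[of V E "y # zs" y ws] is_walk_append[of V E ys y ws]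
      by (simp add: p p'_def)
    moreover have "length p' < length p" "hd p' = hd p" "last p' = last p"
      by (simp_all add: p p'_def hd_append last_append)
    ultimately show ?thesis
      using less.hyps[of p'] by auto
  qed
qed

lemma tree_cutpoint_if_two_edges:
  assumes T: "is_tree V E" and "e1 \<in> E" "e2 \<in> E" "e1 \<noteq> e2" "x \<in> e1" "x \<in> e2"
  shows "is_cutpoint V E x"
proof (rule ccontr)
  assume "\<not> is_cutpoint V E x"
  have sg: "simple_graph V E"
    using T by (simp add: is_tree_def)
  obtain a where a: "e1 = {x, a}" "a \<noteq> x" "x \<in> V" "a \<in> V"
    using simple_graph_edge_other_end[OF sg \<open>e1 \<in> E\<close> \<open>x \<in> e1\<close>] .
  obtain b where b: "e2 = {x, b}" "b \<noteq> x" "b \<in> V"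
    using simple_graph_edge_other_end[OF sg \<open>e2 \<in> E\<close> \<open>x \<in> e2\<close>] .
  have "a \<noteq> b"
    using a b \<open>e1 \<noteq> e2\<close> by auto
  \<comment> \<open>A path from \<open>a\<close> to \<open>b\<close> avoiding \<open>x\<close> closes a cycle through \<open>x\<close>.\<close>
  have "connected_graph (V - {x}) {e \<in> E. x \<notin> e}"
    using \<open>\<not> is_cutpoint V E x\<close> a(3) by (simp add: is_cutpoint_def)
  then obtain p where p: "is_walk (V - {x}) {e \<in> E. x \<notin> e} p" "hd p = a" "last p = b"
    using a b unfolding connected_graph_def by blast
  obtain q where q: "is_walk (V - {x}) {e \<in> E. x \<notin> e} q" "distinct q" "hd q = a" "last q = b"
    using is_walk_distinct[OF p(1)] p(2,3) by blast
  obtain q' where q': "q = a # q'"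
    using q(1,3) by (cases q) (auto simp: is_walk_def)
  have "q' \<noteq> []"
    using q(4) q' \<open>a \<noteq> b\<close> by auto
  have "x \<notin> set q"
    using q(1) by (auto simp: is_walk_def)
  moreover have "is_walk V E (x # q)"
    using q(1) a \<open>e1 \<in> E\<close> by (auto simp: q' is_walk_Cons_Cons intro: is_walk_mono)
  moreover have "length (x # q) \<ge> 3"
    using q' \<open>q' \<noteq> []\<close> by (cases q') auto
  moreover have "{last (x # q), hd (x # q)} \<in> E"
    using q(4) q' b \<open>e2 \<in> E\<close> by (simp add: insert_commute)
  ultimately have "has_cycle V E"
    using q(2) unfolding has_cycle_def by (intro exI[of _ "x # q"]) simp
  then show False
    using T by (simp add: is_tree_def)
qed

lemma tree_finite_edges: "is_tree V E \<Longrightarrow> finite E"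
  by (rule finite_subset[of _ "Pow V"]) (auto simp: is_tree_def simple_graph_def)

lemma tree_edge_has_cutpoint:
  assumes T: "is_tree V E" and "card V \<ge> 3" and "e \<in> E"
  shows "\<exists>c\<in>e. is_cutpoint V E c"
proof (rule ccontr)
  assume no_cut: "\<not> (\<exists>c\<in>e. is_cutpoint V E c)"
  obtain u v where uv: "e = {u, v}" "u \<in> V" "v \<in> V"
    using T \<open>e \<in> E\<close> unfolding is_tree_def simple_graph_def by blast
  \<comment> \<open>Then \<open>e\<close> is the only edge at \<open>u\<close> and at \<open>v\<close>, so no walk leaves \<open>e\<close>.\<close>
  have only_e: "e' = e" if "e' \<in> E" "x \<in> e'" "x \<in> e" for e' x
  proof (rule ccontr)
    assume "e' \<noteq> e"
    then have "is_cutpoint V E x"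
      using tree_cutpoint_if_two_edges[OF T \<open>e \<in> E\<close> that(1)] that(2,3) by simp
    then show False
      using no_cut \<open>x \<in> e\<close> by blast
  qed
  have "\<not> V \<subseteq> {u, v}"
  proof
    assume "V \<subseteq> {u, v}"
    then have "card V \<le> card {u, v}"
      by (intro card_mono) simp_all
    also have "\<dots> \<le> 2"
      by (simp add: card_insert_if)
    finally show False
      using \<open>card V \<ge> 3\<close> by simp
  qed
  then obtain w where w: "w \<in> V" "w \<notin> e"
    using uv(1) by blast
  obtain p where p: "is_walk V E p" "hd p = u" "last p = w"
    using T uv w unfolding is_tree_def connected_graph_def by blast
  have "p ! i \<in> e" if "i < length p" for i
    using that
  proof (induct i)
    case 0
    then show ?case
      using p(2) uv(1) by (simp add: hd_conv_nth)
  next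
    case (Suc i)
    then have "{p ! i, p ! Suc i} \<in> E" "p ! i \<in> e"
      using p(1) by (simp_all add: is_walk_def)
    then show ?case
      using only_e[of "{p ! i, p ! Suc i}" "p ! i"] by auto
  qed
  then have "last p \<in> e"
    using p(1) by (simp add: is_walk_def last_conv_nth)
  then show False
    using p(3) w(2) by simp
qed

lemma card_path_edges_at_le_2:
  assumes "distinct p"
  shows "card {e \<in> {{p ! i, p ! Suc i} | i. Suc i < length p}. v \<in> e} \<le> 2"
proof (cases "v \<in> set p")
  case True
  then obtain k where k: "k < length p" "p ! k = v"
    by (auto simp: in_set_conv_nth)
  have "{e \<in> {{p ! i, p ! Suc i} | i. Suc i < length p}. v \<in> e}
      \<subseteq> {{p ! (k - 1), p ! k}, {p ! k, p ! Suc k}}"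
  proof
    fix e
    assume "e \<in> {e \<in> {{p ! i, p ! Suc i} | i. Suc i < length p}. v \<in> e}"
    then obtain i where i: "e = {p ! i, p ! Suc i}" "Suc i < length p" and "v \<in> e"
      by blast
    then have "p ! i = p ! k \<or> p ! Suc i = p ! k"
      using k(2) by auto
    then have "i = k \<or> Suc i = k"
      using i(2) k(1) assms by (auto simp: nth_eq_iff_index_eq)
    then show "e \<in> {{p ! (k - 1), p ! k}, {p ! k, p ! Suc k}}"
      using i(1) by auto
  qed
  then have "card {e \<in> {{p ! i, p ! Suc i} | i. Suc i < length p}. v \<in> e}
      \<le> card {{p ! (k - 1), p ! k}, {p ! k, p ! Suc k}}"
    by (intro card_mono) simp_all
  also have "\<dots> \<le> 2"
    by (simp add: card_insert_if)
  finally show ?thesis .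
next
  case False
  then have empty: "{e \<in> {{p ! i, p ! Suc i} | i. Suc i < length p}. v \<in> e} = {}"
    by auto
  show ?thesis
    unfolding empty by simp
qed

lemma caterpillar_leaf_neighbour:
  assumes C: "is_caterpillar V E" and "c \<in> V" and "degree E c \<ge> 3"
  shows "\<exists>l. {c, l} \<in> E \<and> degree E l = 1 \<and> l \<noteq> c"
proof -
  define V' where "V' = {v \<in> V. degree E v \<noteq> 1}"
  obtain p where p: "distinct p" "{e \<in> E. e \<subseteq> V'} = {{p ! i, p ! Suc i} | i. Suc i < length p}"
    using C unfolding is_caterpillar_def is_chordless_path_def V'_def Let_def by blast
  have "c \<in> V'"
    using assms(2,3) by (simp add: V'_def)
  \<comment> \<open>At most two edges at \<open>c\<close> lie on the spine.\<close>
  have "\<exists>e\<in>E. c \<in> e \<and> \<not> e \<subseteq> V'"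
  proof (rule ccontr)
    assume "\<not> ?thesis"
    then have "{e \<in> E. c \<in> e} = {e \<in> {e \<in> E. e \<subseteq> V'}. c \<in> e}"
      by auto
    then have "{e \<in> E. c \<in> e} = {e \<in> {{p ! i, p ! Suc i} | i. Suc i < length p}. c \<in> e}"
      by (simp only: p(2))
    then have "degree E c \<le> 2"
      using card_path_edges_at_le_2[OF p(1), of c] by (simp add: degree_def)
    then show False
      using assms(3) by simp
  qed
  then obtain e where e: "e \<in> E" "c \<in> e" "\<not> e \<subseteq> V'"
    by blast
  have "simple_graph V E"
    using C by (simp add: is_caterpillar_def is_tree_def)
  then obtain l where "e = {c, l}" "l \<noteq> c" "l \<in> V"
    using simple_graph_edge_other_end e(1,2) by metis
  moreover have "degree E l = 1"
    using calculation e(3) \<open>c \<in> V'\<close> by (auto simp: V'_def)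
  ultimately show ?thesis
    using e(1) by blast
qed

lemma leaf_edges_disjnt:
  assumes "{c, l} \<in> E" "{c', l'} \<in> E" "c \<noteq> c'"
    and "degree E l = 1" "degree E l' = 1" "degree E c \<ge> 3" "degree E c' \<ge> 3"
  shows "disjnt {c, l} {c', l'}"
proof -
  have "l \<noteq> c'" "l' \<noteq> c" "l \<noteq> c"
    using assms(4-7) by auto
  moreover have "l \<noteq> l'"
  proof
    assume same: "l = l'"
    obtain e0 where e0: "{e \<in> E. l \<in> e} = {e0}"
      using \<open>degree E l = 1\<close> unfolding degree_def by (rule card_1_singletonE)
    have "{c, l} \<in> {e \<in> E. l \<in> e}" "{c', l'} \<in> {e \<in> E. l \<in> e}"
      using assms(1,2) same by auto
    then have "{c, l} = {c', l'}"
      unfolding e0 by simp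
    then show False
      using \<open>l \<noteq> c\<close> \<open>c \<noteq> c'\<close> same by (auto simp: doubleton_eq_iff)
  qed
  ultimately show ?thesis
    using \<open>c \<noteq> c'\<close> by (auto simp: disjnt_def)
qed

lemma caterpillar_leaf_matching:
  assumes cat: "is_caterpillar V E" and "C \<subseteq> V" and deg: "\<forall>c\<in>C. degree E c \<ge> 3"
  shows "\<exists>M\<subseteq>E. pairwise disjnt M \<and> card M = card C"
proof -
  have "\<forall>c\<in>C. \<exists>l. {c, l} \<in> E \<and> degree E l = 1 \<and> l \<noteq> c"
  proof
    fix c
    assume "c \<in> C"
    then show "\<exists>l. {c, l} \<in> E \<and> degree E l = 1 \<and> l \<noteq> c"
      using \<open>C \<subseteq> V\<close> deg by (intro caterpillar_leaf_neighbour[OF cat]) auto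
  qed
  then obtain leaf where leaf: "\<And>c. c \<in> C \<Longrightarrow> {c, leaf c} \<in> E \<and> degree E (leaf c) = 1"
    by (metis bchoice)
  have disj: "disjnt {c, leaf c} {c', leaf c'}" if "c \<in> C" "c' \<in> C" "c \<noteq> c'" for c c'
    using leaf[OF that(1)] leaf[OF that(2)] deg that by (intro leaf_edges_disjnt) auto
  have "inj_on (\<lambda>c. {c, leaf c}) C"
  proof (rule inj_onI, rule ccontr)
    fix c c'
    assume "c \<in> C" "c' \<in> C" "{c, leaf c} = {c', leaf c'}" "c \<noteq> c'"
    then show False
      using disj[of c c'] by (simp add: disjnt_def)
  qed
  moreover have "pairwise disjnt ((\<lambda>c. {c, leaf c}) ` C)"
    unfolding pairwise_image pairwise_def using disj by blast
  moreover have "(\<lambda>c. {c, leaf c}) ` C \<subseteq> E"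
    using leaf by auto
  ultimately show ?thesis
    by (metis card_image)
qed

section \<open>Krull dimension of the edge ring of a line graph\<close>

lemma krull_dim_quot_le:
  assumes "\<And>n P. (\<forall>i\<le>n. prime_ideal_in S (P i) \<and> I \<subseteq> P i) \<Longrightarrow> (\<forall>i<n. P i \<subset> P (Suc i)) \<Longrightarrow> n \<le> k"
  shows "krull_dim_quot S I \<le> enat k"
  unfolding krull_dim_quot_def using assms by (auto intro!: Sup_least)

lemma krull_dim_quot_ge:
  assumes "\<forall>i\<le>n. prime_ideal_in S (P i) \<and> I \<subseteq> P i" "\<forall>i<n. P i \<subset> P (Suc i)"
  shows "enat n \<le> krull_dim_quot S I"
  unfolding krull_dim_quot_def using assms by (blast intro: Sup_upper)

lemma pvar_mult_in_line_graph_edge_ideal: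
  assumes "f \<in> E" "g \<in> E" "f \<noteq> g" "f \<inter> g \<noteq> {}"
  shows "pvar f * pvar g \<in> line_graph_edge_ideal E"
proof -
  have "pvar f * pvar g \<in> {pvar f * pvar g | f g. f \<in> E \<and> g \<in> E \<and> f \<noteq> g \<and> f \<inter> g \<noteq> {}}"
    using assms by blast
  then show ?thesis
    unfolding line_graph_edge_ideal_def by (rule subsetD[OF gen_ideal_gens])
qed

lemma pairwise_disjnt_vars_notin_prime:
  assumes P: "prime_ideal_in (poly_ring E) P" "line_graph_edge_ideal E \<subseteq> P"
  shows "pairwise disjnt {f \<in> E. pvar f \<notin> P}"
proof (rule pairwiseI, rule ccontr)
  fix f g
  assume f: "f \<in> {f \<in> E. pvar f \<notin> P}" and g: "g \<in> {f \<in> E. pvar f \<notin> P}"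
    and "f \<noteq> g" "\<not> disjnt f g"
  then have "pvar f * pvar g \<in> P"
    using pvar_mult_in_line_graph_edge_ideal[of f E g] P(2) by (auto simp: disjnt_def)
  moreover have "pvar f \<in> poly_ring E" "pvar g \<in> poly_ring E"
    using f g by (auto simp: poly_ring_pvar)
  ultimately have "pvar f \<in> P \<or> pvar g \<in> P"
    using P(1) unfolding prime_ideal_in_def by blast
  then show False
    using f g by simp
qed

lemma card_le_card_if_pairwise_disjnt_hitting:
  assumes "finite C" "pairwise disjnt F" "\<forall>f\<in>F. f \<inter> C \<noteq> {}"
  shows "card F \<le> card C"
proof -
  have "\<forall>f\<in>F. \<exists>c. c \<in> f \<inter> C"
    using assms(3) by blast
  then obtain h where h: "\<And>f. f \<in> F \<Longrightarrow> h f \<in> f \<inter> C"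
    by (metis bchoice)
  have "inj_on h F"
  proof (rule inj_onI, rule ccontr)
    fix f g
    assume "f \<in> F" "g \<in> F" "h f = h g" "f \<noteq> g"
    then show False
      using h[of f] h[of g] \<open>pairwise disjnt F\<close> by (auto simp: pairwise_def disjnt_def)
  qed
  moreover have "h ` F \<subseteq> C"
    using h by auto
  ultimately show ?thesis
    using \<open>finite C\<close> by (rule card_inj_on_le)
qed

text \<open>The variables outside the bottom prime of a chain over \<open>I(L(G))\<close> are edges that pairwise
  do not meet, hence at most one per vertex of a cover.\<close>

lemma krull_dim_line_graph_le_cover:
  fixes E :: "'v set set"
  assumes "finite E" "finite C" and cover: "\<forall>e\<in>E. e \<inter> C \<noteq> {}"
  shows "krull_dim_quot (poly_ring E :: ('v set, 'k::field) mpoly set) (line_graph_edge_ideal E)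
    \<le> enat (card C)"
proof (rule krull_dim_quot_le)
  fix n and P :: "nat \<Rightarrow> ('v set, 'k) mpoly set"
  assume P: "\<forall>i\<le>n. prime_ideal_in (poly_ring E) (P i) \<and> line_graph_edge_ideal E \<subseteq> P i"
    and chain: "\<forall>i<n. P i \<subset> P (Suc i)"
  define F where "F = {f \<in> E. pvar f \<notin> P 0}"
  have "n \<le> card F"
    using \<open>finite E\<close> _ _ chain by (rule prime_chain_length_le) (use P in \<open>auto simp: F_def\<close>)
  also have "\<dots> \<le> card C"
    using \<open>finite C\<close> pairwise_disjnt_vars_notin_prime[of E "P 0"] P cover
    by (intro card_le_card_if_pairwise_disjnt_hitting) (auto simp: F_def)
  finally show "n \<le> card C" .
qed

lemma line_graph_edge_ideal_subset_var_ideal: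
  assumes "pairwise disjnt M"
  shows "line_graph_edge_ideal E \<subseteq> var_ideal E (E - M)"
  unfolding line_graph_edge_ideal_def
proof (intro gen_ideal_least subsetI)
  show "ideal_in (poly_ring E) (var_ideal E (E - M))"
    by (rule ideal_var_ideal)
  fix p
  assume "p \<in> {pvar f * pvar g | f g. f \<in> E \<and> g \<in> E \<and> f \<noteq> g \<and> f \<inter> g \<noteq> {}}"
  then obtain f g where p: "p = pvar f * pvar g" and fg: "f \<in> E" "g \<in> E" "f \<noteq> g" "f \<inter> g \<noteq> {}"
    by blast
  have "f \<in> E - M \<or> g \<in> E - M"
    using assms fg by (auto simp: pairwise_def disjnt_def)
  then show "p \<in> var_ideal E (E - M)"
    unfolding p using fg(1,2) by (rule pvar_mult_in_var_ideal[rotated 2])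
qed

text \<open>Deleting the edges of a matching one at a time from \<open>E\<close> gives a chain of monomial primes
  over \<open>I(L(G))\<close>.\<close>

lemma krull_dim_line_graph_ge_matching:
  fixes E :: "'v set set"
  assumes "finite E" "M \<subseteq> E" "pairwise disjnt M"
  shows "enat (card M)
    \<le> krull_dim_quot (poly_ring E :: ('v set, 'k::field) mpoly set) (line_graph_edge_ideal E)"
proof -
  obtain ms where ms: "distinct ms" "set ms = M"
    using finite_distinct_list finite_subset[OF assms(2,1)] by blast
  define P :: "nat \<Rightarrow> ('v set, 'k) mpoly set" where
    "P j = var_ideal E (E - set (drop j ms))" for j
  have "line_graph_edge_ideal E \<subseteq> P j" for j
    unfolding P_def using \<open>pairwise disjnt M\<close> ms(2) set_drop_subset[of j ms]
    by (intro line_graph_edge_ideal_subset_var_ideal) (auto intro: pairwise_subset)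
  moreover have "prime_ideal_in (poly_ring E) (P j)" for j
    unfolding P_def using \<open>finite E\<close> by (rule prime_var_ideal)
  moreover have "P j \<subset> P (Suc j)" if "j < length ms" for j
  proof -
    have drop: "drop j ms = ms ! j # drop (Suc j) ms"
      using that by (simp add: Cons_nth_drop_Suc)
    have "ms ! j \<in> E"
      using that ms(2) assms(2) by auto
    moreover have "ms ! j \<notin> set (drop (Suc j) ms)"
      using distinct_drop[OF ms(1), of j] by (simp add: drop)
    ultimately have "pvar (ms ! j) \<in> P (Suc j) - P j"
      by (simp add: P_def pvar_in_var_ideal_iff drop)
    moreover have "P j \<subseteq> P (Suc j)"
      unfolding P_def by (rule var_ideal_mono) (auto simp: drop)
    ultimately show ?thesis
      by blast
  qed
  ultimately have "enat (length ms)
      \<le> krull_dim_quot (poly_ring E :: ('v set, 'k) mpoly set) (line_graph_edge_ideal E)"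
    by (intro krull_dim_quot_ge[where P = P]) auto
  then show ?thesis
    using distinct_card[OF ms(1)] ms(2) by simp
qed

theorem proposition3p6:
  fixes V :: "'v set" and E :: "'v set set"
  assumes "is_caterpillar V E"
    and "card V \<ge> 3"
    and "\<forall>v. is_cutpoint V E v \<longrightarrow> degree E v \<ge> 3"
  shows "krull_dim_quot (poly_ring E :: ('v set, 'k::field) mpoly set)
           (line_graph_edge_ideal E)
         = enat (card {v. is_cutpoint V E v})"
proof -
  define C where "C = {v. is_cutpoint V E v}"
  have T: "is_tree V E"
    using assms(1) by (simp add: is_caterpillar_def)
  then have "finite E"
    by (rule tree_finite_edges)
  have "C \<subseteq> V"
    by (auto simp: C_def is_cutpoint_def)
  moreover have "finite V"
    using T by (simp add: is_tree_def)
  ultimately have "finite C"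
    by (rule finite_subset)
  have "\<forall>e\<in>E. e \<inter> C \<noteq> {}"
    using tree_edge_has_cutpoint[OF T assms(2)] by (auto simp: C_def)
  then have "krull_dim_quot (poly_ring E :: ('v set, 'k) mpoly set) (line_graph_edge_ideal E)
      \<le> enat (card C)"
    using \<open>finite E\<close> \<open>finite C\<close> by (rule krull_dim_line_graph_le_cover[rotated 2])
  moreover obtain M where "M \<subseteq> E" "pairwise disjnt M" "card M = card C"
    using caterpillar_leaf_matching[OF assms(1) \<open>C \<subseteq> V\<close>] assms(3) by (auto simp: C_def)
  then have "enat (card C)
      \<le> krull_dim_quot (poly_ring E :: ('v set, 'k) mpoly set) (line_graph_edge_ideal E)"
    using krull_dim_line_graph_ge_matching[OF \<open>finite E\<close>] by metis
  ultimately show ?thesis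
    unfolding C_def by (rule order_antisym)
qed

end
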